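(* Let $\mathbf{G}\subset\mathbb{R}^n$ be a bounded open set with real algebraic boundary, $\mathbf{G}=\mathrm{int}\,\overline{\mathbf{G}}$, $\partial\mathbf{G}$ of degree $d$, and $0$ not in the real zero set of $I(\partial\mathbf{G})$; let $y_\alpha=\int_{\mathbf{G}}\mathbf{x}^\alpha d\mathbf{x}$. Let $k\le 2d$. If the linear system $\mathbf{M}^d_k(\mathbf{y})\begin{bmatrix}-1\\ \mathbf{g}\end{bmatrix}=0$ in the unknown $\mathbf{g}\in\mathbb{R}^{s(d)-1}$ has a unique solution, then this solution also solves $\mathbf{M}^d_{2d}(\mathbf{y})\begin{bmatrix}-1\\ \mathbf{g}\end{bmatrix}=0$ (and hence the polynomial with coefficient vector $(0,\mathbf{g})$ equals $1$ on $\partial\mathbf{G}$).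
   Context: $\mathbb{N}^n_k:=\{\alpha\in\mathbb{N}^n:|\alpha|\le k\}$, $s(d)=\binom{n+d}{n}$. The matrix $\mathbf{M}^d_k(\mathbf{y})$ has rows indexed by $\alpha\in\mathbb{N}^n_k$, columns by $\beta\in\mathbb{N}^n_d$ (first column $\beta=0$), entries $\frac{n+|\alpha|+|\beta|}{n+|\alpha|}y_{\alpha+\beta}$. The vanishing ideal $I(\partial\mathbf{G})$ is principal; the degree of $\partial\mathbf{G}$ is the degree of its generator. *)

theory Defs
  imports "HOL-Analysis.Analysis"
begin

text \<open>Multi-indices on the coordinate type 'n (dimension n = CARD('n)).\<close>

definition mi_abs :: "('n::finite \<Rightarrow> nat) \<Rightarrow> nat" where
  "mi_abs \<alpha> = (\<Sum>i\<in>UNIV. \<alpha> i)"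

definition mi_set :: "nat \<Rightarrow> ('n::finite \<Rightarrow> nat) set" where
  "mi_set k = {\<alpha>. mi_abs \<alpha> \<le> k}"

definition mono :: "('n::finite \<Rightarrow> nat) \<Rightarrow> real^'n \<Rightarrow> real" where
  "mono \<alpha> x = (\<Prod>i\<in>UNIV. (x $ i) ^ \<alpha> i)"

definition poly_le :: "nat \<Rightarrow> (real^'n::finite \<Rightarrow> real) \<Rightarrow> bool" where
  "poly_le d f \<longleftrightarrow> (\<exists>c. \<forall>x. f x = (\<Sum>\<alpha>\<in>mi_set d. c \<alpha> * mono \<alpha> x))"

definition is_poly :: "(real^'n::finite \<Rightarrow> real) \<Rightarrow> bool" where
  "is_poly f \<longleftrightarrow> (\<exists>d. poly_le d f)"

definition poly_deg_eq :: "nat \<Rightarrow> (real^'n::finite \<Rightarrow> real) \<Rightarrow> bool" where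
  "poly_deg_eq d f \<longleftrightarrow> poly_le d f \<and> (d = 0 \<or> \<not> poly_le (d - 1) f)"

text \<open>Vanishing ideal of a set S (polynomials as polynomial functions).\<close>

definition vanishing_ideal :: "(real^'n::finite) set \<Rightarrow> (real^'n \<Rightarrow> real) set" where
  "vanishing_ideal S = {f. is_poly f \<and> (\<forall>x\<in>S. f x = 0)}"

definition real_zero_set :: "(real^'n::finite \<Rightarrow> real) set \<Rightarrow> (real^'n) set" where
  "real_zero_set I = {x. \<forall>f\<in>I. f x = 0}"

definition generates :: "(real^'n::finite \<Rightarrow> real) \<Rightarrow> (real^'n \<Rightarrow> real) set \<Rightarrow> bool" where
  "generates h I \<longleftrightarrow> is_poly h \<and> I = {f. \<exists>q. is_poly q \<and> f = (\<lambda>x. q x * h x)}"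

definition real_algebraic_set :: "(real^'n::finite) set \<Rightarrow> bool" where
  "real_algebraic_set S \<longleftrightarrow> (\<exists>P. finite P \<and> (\<forall>p\<in>P. is_poly p) \<and> S = real_zero_set P)"

definition moments :: "(real^'n::finite) set \<Rightarrow> ('n \<Rightarrow> nat) \<Rightarrow> real" where
  "moments G \<alpha> = integral G (mono \<alpha>)"

definition mom_entry :: "(('n::finite \<Rightarrow> nat) \<Rightarrow> real) \<Rightarrow> ('n \<Rightarrow> nat) \<Rightarrow> ('n \<Rightarrow> nat) \<Rightarrow> real" where
  "mom_entry y \<alpha> \<beta> =
     (real CARD('n) + real (mi_abs \<alpha>) + real (mi_abs \<beta>)) / (real CARD('n) + real (mi_abs \<alpha>))
     * y (\<lambda>i. \<alpha> i + \<beta> i)"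

definition ext_vec :: "(('n::finite \<Rightarrow> nat) \<Rightarrow> real) \<Rightarrow> ('n \<Rightarrow> nat) \<Rightarrow> real" where
  "ext_vec g \<beta> = (if \<beta> = (\<lambda>_. 0) then -1 else g \<beta>)"

text \<open>Solution set of M^d_k(y) [-1; g] = 0, with g in R^{s(d)-1}, i.e. indexed by N^n_d minus {0}
  (represented as functions vanishing outside that index set).\<close>

definition mom_solutions :: "nat \<Rightarrow> nat \<Rightarrow> (('n::finite \<Rightarrow> nat) \<Rightarrow> real) \<Rightarrow> (('n \<Rightarrow> nat) \<Rightarrow> real) set" where
  "mom_solutions d k y =
     {g. (\<forall>\<beta>. \<beta> \<notin> mi_set d - {\<lambda>_. 0} \<longrightarrow> g \<beta> = 0) \<and>
         (\<forall>\<alpha>\<in>mi_set k. (\<Sum>\<beta>\<in>mi_set d. mom_entry y \<alpha> \<beta> * ext_vec g \<beta>) = 0)}"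

end

theory Submission
  imports Defs "HOL-Computational_Algebra.Polynomial"
begin

(*
  Let h = \<Sum>_\<beta> c_\<beta> x^\<beta> (|\<beta>| \<le> d) generate the vanishing ideal of \<partial>G.  For every multi-index \<alpha>
  and coordinate i, the polynomial P = x_i x^\<alpha> h vanishes on \<partial>G, so by Stokes' theorem the
  integral over G of \<partial>P/\<partial>x_i is zero.  Summing over i (Euler's identity for the
  homogeneous parts) gives, for EVERY \<alpha>,
      \<Sum>_\<beta> (n + |\<alpha>| + |\<beta>|) c_\<beta> y_(\<alpha>+\<beta>) = 0.
  Since 0 is not a zero of the ideal, c_0 = h(0) \<noteq> 0, and dividing by -(n + |\<alpha>|) c_0 shows
  that g_\<beta> = -c_\<beta>/c_0 solves M^d_m(y)[-1; g] = 0 for every m.  In particular it solves the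
  system for k, hence equals the unique solution g, and it solves the system for 2d.

  Stokes' theorem is only needed for a coordinate derivative, so it is proved directly:
  along each line parallel to a coordinate axis the boundary is met in finitely many
  points (or P vanishes on the whole line), so the one-dimensional fundamental theorem of
  calculus kills the line integral, and Fubini's theorem assembles the line integrals.
*)

section \<open>Multi-indices and monomials\<close>

lemma finite_mi_set: "finite (mi_set d :: ('n::finite \<Rightarrow> nat) set)"
proof -
  have "mi_set d \<subseteq> PiE UNIV (\<lambda>_::'n. {..d})"
  proof
    fix \<alpha> :: "'n \<Rightarrow> nat" assume \<alpha>: "\<alpha> \<in> mi_set d"
    have "\<alpha> j \<le> d" for j
      using member_le_sum[of j UNIV \<alpha>] \<alpha> by (simp add: mi_set_def mi_abs_def)
    then show "\<alpha> \<in> PiE UNIV (\<lambda>_. {..d})" by (auto simp: PiE_UNIV_domain)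
  qed
  moreover have "finite (PiE UNIV (\<lambda>_::'n. {..d}))" by (rule finite_PiE) auto
  ultimately show ?thesis by (rule finite_subset)
qed

lemma zero_in_mi_set: "(\<lambda>_. 0) \<in> mi_set d"
  by (simp add: mi_set_def mi_abs_def)

lemma mono_zero: "mono \<alpha> (0::real^'n::finite) = (if \<alpha> = (\<lambda>_. 0) then 1 else 0)"
proof (cases "\<alpha> = (\<lambda>_. 0)")
  case True then show ?thesis by (simp add: mono_def)
next
  case False
  then obtain j where "\<alpha> j \<noteq> 0" by auto
  then have "(\<Prod>i\<in>UNIV. (0::real) ^ \<alpha> i) = 0" by (intro prod_zero) auto
  then show ?thesis using False by (simp add: mono_def)
qed

lemma mono_add: "mono (\<lambda>j. \<alpha> j + \<beta> j) x = mono \<alpha> x * mono \<beta> x"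
  by (simp add: mono_def power_add prod.distrib)

lemma continuous_on_mono: "continuous_on UNIV (mono \<alpha> :: real^'n::finite \<Rightarrow> real)"
  unfolding mono_def by (intro continuous_intros)

lemma poly_expansion_at_zero:
  fixes h :: "real^'n::finite \<Rightarrow> real"
  assumes "\<And>x. h x = (\<Sum>\<beta>\<in>mi_set d. c \<beta> * mono \<beta> x)"
  shows "h 0 = c (\<lambda>_. 0)"
  using assms zero_in_mi_set[of d]
  by (simp add: mono_zero if_distrib sum.delta[OF finite_mi_set] zero_in_mi_set cong: if_cong)

lemma is_poly_one: "is_poly (\<lambda>_::real^'n::finite. 1)"
proof -
  have "mi_set 0 = {(\<lambda>_::'n. 0::nat)}" by (auto simp: mi_set_def mi_abs_def)
  then have "poly_le 0 (\<lambda>_::real^'n. 1)"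
    unfolding poly_le_def by (intro exI[of _ "\<lambda>_. 1"]) (simp add: mono_def)
  then show ?thesis by (auto simp: is_poly_def)
qed

text \<open>The restriction of a polynomial to a line is a univariate polynomial; hence it either
  vanishes on the whole line or the line meets the zero set of the polynomial (and in
  particular any set on which it vanishes) in finitely many points.\<close>

lemma poly_restrict_line:
  fixes f :: "real^'n::finite \<Rightarrow> real"
  assumes "poly_le d f"
  shows "\<exists>q. \<forall>t. f (p + t *\<^sub>R e) = poly q t"
proof -
  obtain c where c: "\<And>x. f x = (\<Sum>\<alpha>\<in>mi_set d. c \<alpha> * mono \<alpha> x)"
    using assms by (auto simp: poly_le_def)
  define q where "q = (\<Sum>\<alpha>\<in>mi_set d. smult (c \<alpha>) (\<Prod>j\<in>UNIV. [:p $ j, e $ j:] ^ \<alpha> j))"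
  have "f (p + t *\<^sub>R e) = poly q t" for t
    unfolding c q_def mono_def by (simp add: poly_sum poly_prod poly_power algebra_simps)
  then show ?thesis by blast
qed

lemma poly_line_vanishes_or_finite:
  fixes h :: "real^'n::finite \<Rightarrow> real"
  assumes "poly_le d h" and vanish: "\<And>x. x \<in> S \<Longrightarrow> h x = 0"
  shows "(\<forall>t. h (p + t *\<^sub>R e) = 0) \<or> finite {t. p + t *\<^sub>R e \<in> S}"
proof -
  obtain q where q: "\<And>t. h (p + t *\<^sub>R e) = poly q t"
    using poly_restrict_line[OF assms(1)] by blast
  show ?thesis
  proof (cases "q = 0")
    case False
    have "{t. p + t *\<^sub>R e \<in> S} \<subseteq> {t. poly q t = 0}"
      using vanish q by (metis (mono_tags, lifting) mem_Collect_eq subsetI)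
    then show ?thesis using poly_roots_finite[OF False] finite_subset by blast
  qed (use q in simp)
qed

lemma has_real_derivative_coord_mono:
  fixes x :: "real^'n::finite"
  shows "((\<lambda>s. (x + s *\<^sub>R axis i 1) $ i * mono \<gamma> (x + s *\<^sub>R axis i 1)) has_real_derivative
          (real (\<gamma> i) + 1) * mono \<gamma> (x + t *\<^sub>R axis i 1)) (at t)"
proof -
  define C where "C = (\<Prod>j\<in>UNIV-{i}. (x $ j) ^ \<gamma> j)"
  have split: "mono \<gamma> (x + s *\<^sub>R axis i 1) = (x $ i + s) ^ \<gamma> i * C" for s
  proof -
    have "mono \<gamma> (x + s *\<^sub>R axis i 1)
        = (x $ i + s) ^ \<gamma> i * (\<Prod>j\<in>UNIV-{i}. ((x + s *\<^sub>R axis i 1) $ j) ^ \<gamma> j)"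
      unfolding mono_def by (subst prod.remove[of UNIV i]) auto
    also have "(\<Prod>j\<in>UNIV-{i}. ((x + s *\<^sub>R axis i 1) $ j) ^ \<gamma> j) = C"
      unfolding C_def by (intro prod.cong) (auto simp: axis_def)
    finally show ?thesis .
  qed
  have "((\<lambda>s. x $ i + s) has_real_derivative 1) (at t)" by (auto intro!: derivative_eq_intros)
  then have "((\<lambda>s. (x $ i + s) ^ Suc (\<gamma> i) * C) has_real_derivative
      (1 + of_nat (\<gamma> i)) * (1 * (x $ i + t) ^ \<gamma> i) * C) (at t)"
    by (intro DERIV_cmult_right DERIV_power_Suc)
  then show ?thesis by (simp add: split algebra_simps)
qed

text \<open>Euler-type identity: summing the coordinate derivatives of x_i x^(\<alpha>+\<beta>) over i
  produces the weight n + |\<alpha>| + |\<beta>| of the moment matrix.\<close>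

lemma sum_coordinate_weights:
  fixes x :: "real^'n::finite"
  shows "(\<Sum>i\<in>UNIV. \<Sum>\<beta>\<in>B. c \<beta> * ((real (\<alpha> i + \<beta> i) + 1) * mono (\<lambda>j. \<alpha> j + \<beta> j) x))
       = (\<Sum>\<beta>\<in>B. (real CARD('n) + real (mi_abs \<alpha>) + real (mi_abs \<beta>)) * c \<beta>
                   * mono (\<lambda>j. \<alpha> j + \<beta> j) x)"
proof -
  have "(\<Sum>i\<in>UNIV. \<Sum>\<beta>\<in>B. c \<beta> * ((real (\<alpha> i + \<beta> i) + 1) * mono (\<lambda>j. \<alpha> j + \<beta> j) x))
      = (\<Sum>\<beta>\<in>B. c \<beta> * mono (\<lambda>j. \<alpha> j + \<beta> j) x * (\<Sum>i\<in>UNIV. real (\<alpha> i + \<beta> i) + 1))"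
    by (subst sum.swap) (simp add: sum_distrib_left algebra_simps)
  also have "\<dots> = (\<Sum>\<beta>\<in>B. (real CARD('n) + real (mi_abs \<alpha>) + real (mi_abs \<beta>)) * c \<beta>
                   * mono (\<lambda>j. \<alpha> j + \<beta> j) x)"
    by (intro sum.cong refl) (simp add: mi_abs_def sum.distrib algebra_simps)
  finally show ?thesis .
qed

section \<open>Integrals of derivatives over bounded open sets\<close>

lemma integrable_indicator_continuous:
  fixes f :: "'a::euclidean_space \<Rightarrow> real"
  assumes cf: "continuous_on UNIV f" and bS: "bounded S" and oS: "open S"
  shows "integrable lborel (\<lambda>x. indicator S x * f x)"
proof -
  have cc: "compact (closure S)" using bS by (simp add: compact_closure)
  then have "compact (f ` closure S)"
    by (meson cf compact_continuous_image continuous_on_subset top_greatest)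
  then obtain B where B: "\<And>x. x \<in> closure S \<Longrightarrow> norm (f x) \<le> B"
    by (metis bounded_iff compact_imp_bounded image_eqI)
  have fm: "f \<in> borel_measurable borel" using cf by (rule borel_measurable_continuous_onI)
  have Sm: "S \<in> sets borel" using oS by simp
  show ?thesis
  proof (rule integrableI_bounded_set[where A="closure S" and B="max B 0"])
    show "closure S \<in> sets lborel" by simp
    show "(\<lambda>x. indicator S x * f x) \<in> borel_measurable lborel" using fm Sm by measurable
    show "emeasure lborel (closure S) < \<infinity>" using cc by (rule emeasure_compact_finite)
    show "AE x in lborel. x \<in> closure S \<longrightarrow> norm (indicator S x * f x) \<le> max B 0"
      using B closure_subset by (auto simp: indicator_def le_max_iff_disj)
    show "AE x in lborel. x \<notin> closure S \<longrightarrow> indicator S x * f x = 0"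
      using closure_subset by (auto simp: indicator_def)
  qed
qed

lemma integrable_on_bounded_open:
  fixes f :: "'a::euclidean_space \<Rightarrow> real"
  assumes "continuous_on UNIV f" "bounded G" "open G"
  shows "f integrable_on G"
proof -
  have "(\<lambda>x. indicator G x * f x) integrable_on UNIV"
    by (rule integrable_on_lborel[OF integrable_indicator_continuous[OF assms]])
  moreover have "(\<lambda>x. indicator G x * f x) = (\<lambda>x. if x \<in> G then f x else 0)"
    by (auto simp: indicator_def fun_eq_iff)
  ultimately show ?thesis by (simp add: integrable_restrict_UNIV)
qed

text \<open>The function equal to \<phi> on U and 0 outside
  is continuous and has derivative 1_U \<phi>' off the boundary, so the fundamental theorem of
  calculus applies on an interval containing U.\<close>

lemma integral_derivative_bounded_open_real:
  fixes \<phi> \<phi>' :: "real \<Rightarrow> real" and U :: "real set"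
  assumes oU: "open U" and bU: "bounded U"
    and der: "\<And>y. (\<phi> has_real_derivative \<phi>' y) (at y)"
    and boundary: "\<And>y. y \<in> frontier U \<Longrightarrow> \<phi> y = 0"
    and fin: "finite (frontier U)"
  shows "((\<lambda>y. indicator U y * \<phi>' y) has_integral 0) UNIV"
proof -
  obtain B where B: "\<And>x. x \<in> U \<Longrightarrow> \<bar>x\<bar> \<le> B" using bU unfolding bounded_iff by auto
  define a where "a = -(\<bar>B\<bar>+1)"
  define b where "b = \<bar>B\<bar>+1"
  have Uab: "U \<subseteq> {a..b}" and aU: "a \<notin> U" and bU': "b \<notin> U"
    using B by (force simp: a_def b_def)+
  define \<rho> where "\<rho> = (\<lambda>y. if y \<in> U then \<phi> y else 0)"
  have cphi: "continuous_on UNIV \<phi>"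
    using der by (meson DERIV_isCont continuous_at_imp_continuous_on)
  have fr: "frontier U = closure U - U" using oU by (simp add: frontier_def interior_open)
  have "continuous_on (closure U \<union> (- U)) \<rho>"
    unfolding \<rho>_def
    by (rule continuous_on_cases) (use oU cphi boundary fr in \<open>auto intro: continuous_on_subset\<close>)
  moreover have "closure U \<union> (- U) = UNIV" using closure_subset by auto
  ultimately have crho: "continuous_on {a..b} \<rho>" by (metis continuous_on_subset top_greatest)
  have deriv_rho: "(\<rho> has_vector_derivative (indicator U x * \<phi>' x)) (at x)"
    if x: "x \<in> {a..b} - frontier U" for x
  proof (cases "x \<in> U")
    case True
    have "(\<rho> has_real_derivative \<phi>' x) (at x)"
      by (rule has_field_derivative_transform_within_open[OF der oU True]) (simp add: \<rho>_def)
    then show ?thesis using True by (simp add: has_real_derivative_iff_has_vector_derivative)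
  next
    case False
    then have xc: "x \<in> - closure U" using x fr by auto
    have "(\<rho> has_real_derivative 0) (at x)"
      by (rule has_field_derivative_transform_within_open[of "\<lambda>_. 0" 0 x "- closure U"])
         (use xc closure_subset in \<open>auto simp: \<rho>_def\<close>)
    then show ?thesis using False by (simp add: has_real_derivative_iff_has_vector_derivative)
  qed
  have "((\<lambda>y. indicator U y * \<phi>' y) has_integral (\<rho> b - \<rho> a)) {a..b}"
    by (rule fundamental_theorem_of_calculus_strong[OF fin _ deriv_rho crho]) (auto simp: a_def b_def)
  then have "((\<lambda>y. indicator U y * \<phi>' y) has_integral 0) {a..b}"
    using aU bU' by (simp add: \<rho>_def)
  then show ?thesis
    by (rule has_integral_on_superset) (use Uab in \<open>auto simp: indicator_def\<close>)
qed

text \<open>The same statement on a line p + \<real>e through a bounded open G: the trace of G on the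
  line is a bounded open subset of \<real> whose boundary lies in the trace of \<partial>G.  If P vanishes
  identically on the line, its derivative along the line is zero anyway.\<close>

lemma line_integral_of_derivative:
  fixes G :: "'a::euclidean_space set" and P D :: "'a \<Rightarrow> real"
  assumes bG: "bounded G" and oG: "open G" and cD: "continuous_on UNIV D" and ne: "norm e = 1"
    and boundary: "\<And>x. x \<in> frontier G \<Longrightarrow> P x = 0"
    and dP: "\<And>t. ((\<lambda>s. P (p + s *\<^sub>R e)) has_real_derivative D (p + t *\<^sub>R e)) (at t)"
    and degenerate: "(\<forall>t. P (p + t *\<^sub>R e) = 0) \<or> finite {t. p + t *\<^sub>R e \<in> frontier G}"
  shows "(\<integral>y. indicator G (p + y *\<^sub>R e) * D (p + y *\<^sub>R e) \<partial>lborel) = 0"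
proof -
  define U where "U = (\<lambda>y. p + y *\<^sub>R e) -` G"
  have ind: "indicator G (p + y *\<^sub>R e) = indicator U y" for y
    by (simp add: U_def indicator_def)
  have oU: "open U"
    unfolding U_def by (rule continuous_open_vimage[OF oG]) (intro continuous_intros)
  obtain R where R: "\<And>x. x \<in> G \<Longrightarrow> norm x \<le> R" using bG unfolding bounded_iff by auto
  have bU: "bounded U" unfolding bounded_iff
  proof (intro exI ballI)
    fix y assume "y \<in> U"
    then have "norm (p + y *\<^sub>R e) \<le> R" using R by (auto simp: U_def)
    moreover have "norm (y *\<^sub>R e) \<le> norm (p + y *\<^sub>R e) + norm p"
      by (metis add_diff_cancel_left' norm_triangle_ineq4 add.commute)
    ultimately show "norm y \<le> R + norm p" using ne by simp
  qed
  have cD': "continuous_on UNIV (\<lambda>y. D (p + y *\<^sub>R e))"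
    by (rule continuous_on_compose2[OF cD]) (auto intro!: continuous_intros)
  have "((\<lambda>y. indicator U y * D (p + y *\<^sub>R e)) has_integral 0) UNIV"
  proof (cases "\<forall>t. P (p + t *\<^sub>R e) = 0")
    case True
    then have "((\<lambda>s. P (p + s *\<^sub>R e)) has_real_derivative 0) (at y)" for y by simp
    then have "D (p + y *\<^sub>R e) = 0" for y using dP DERIV_unique by blast
    then show ?thesis by simp
  next
    case False
    have frU: "frontier U \<subseteq> {t. p + t *\<^sub>R e \<in> frontier G}"
    proof
      fix y assume y: "y \<in> frontier U"
      have "closure U \<subseteq> (\<lambda>y. p + y *\<^sub>R e) -` closure G"
        unfolding U_def
        by (rule closure_minimal)
           (auto intro: closure_subset[THEN subsetD] continuous_intros
                  continuous_closed_vimage[OF closed_closure])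
      moreover have "y \<in> closure U" "y \<notin> U" using y oU by (auto simp: frontier_def interior_open)
      ultimately show "y \<in> {t. p + t *\<^sub>R e \<in> frontier G}"
        using oG by (auto simp: U_def frontier_def interior_open)
    qed
    have "finite {t. p + t *\<^sub>R e \<in> frontier G}" using degenerate False by blast
    then have fin: "finite (frontier U)" using frU by (rule finite_subset[rotated])
    show ?thesis
      by (rule integral_derivative_bounded_open_real[OF oU bU dP _ fin]) (use frU boundary in auto)
  qed
  then show ?thesis
    unfolding ind using integral_lborel[OF integrable_indicator_continuous[OF cD' bU oU]]
    by (simp add: integral_unique)
qed

lemma lborel_integral_zero_by_lines:
  fixes \<Phi> :: "'a::euclidean_space \<Rightarrow> real"
  assumes int: "integrable lborel \<Phi>" and eB: "e \<in> Basis"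
    and line: "\<And>p. (\<integral>y. \<Phi> (p + y *\<^sub>R e) \<partial>lborel) = 0"
  shows "integral\<^sup>L lborel \<Phi> = 0"
proof -
  interpret product_sigma_finite "\<lambda>_::'a. (lborel::real measure)" by standard
  have meas: "(\<lambda>f. \<Sum>b\<in>Basis. f b *\<^sub>R b) \<in> measurable (\<Pi>\<^sub>M b\<in>Basis. lborel) (borel :: 'a measure)"
    by measurable
  have Pm: "\<Phi> \<in> borel_measurable borel" using int by auto
  have lborel: "(lborel :: 'a measure) = distr (\<Pi>\<^sub>M b\<in>Basis. lborel) borel (\<lambda>f. \<Sum>b\<in>Basis. f b *\<^sub>R b)"
    by (rule lborel_eq)
  have int_prod: "integrable (\<Pi>\<^sub>M b\<in>insert e (Basis - {e}). lborel) (\<lambda>f. \<Phi> (\<Sum>b\<in>Basis. f b *\<^sub>R b))"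
    using int unfolding lborel insert_Diff[OF eB] by (subst (asm) integrable_distr_eq[OF meas Pm])
  have coords: "(\<Sum>b\<in>Basis. (x(e:=y)) b *\<^sub>R b) = (\<Sum>b\<in>Basis-{e}. x b *\<^sub>R b) + y *\<^sub>R e" for x y
    by (subst sum.remove[OF finite_Basis eB]) (auto intro!: sum.cong)
  have "integral\<^sup>L lborel \<Phi> = (\<integral>f. \<Phi> (\<Sum>b\<in>Basis. f b *\<^sub>R b) \<partial>(\<Pi>\<^sub>M b\<in>insert e (Basis - {e}). lborel))"
    unfolding lborel insert_Diff[OF eB] by (rule integral_distr[OF meas Pm])
  also have "\<dots> = (\<integral>x. (\<integral>y. \<Phi> (\<Sum>b\<in>Basis. (x(e:=y)) b *\<^sub>R b) \<partial>lborel) \<partial>(\<Pi>\<^sub>M b\<in>Basis - {e}. lborel))"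
    by (rule product_integral_insert[OF _ _ int_prod]) auto
  also have "\<dots> = 0" unfolding coords line by simp
  finally show ?thesis .
qed

lemma integral_directional_derivative_zero:
  fixes G :: "'a::euclidean_space set" and P D :: "'a \<Rightarrow> real"
  assumes bG: "bounded G" and oG: "open G" and cD: "continuous_on UNIV D" and eB: "e \<in> Basis"
    and boundary: "\<And>x. x \<in> frontier G \<Longrightarrow> P x = 0"
    and dP: "\<And>x t. ((\<lambda>s. P (x + s *\<^sub>R e)) has_real_derivative D (x + t *\<^sub>R e)) (at t)"
    and degenerate: "\<And>x. (\<forall>t. P (x + t *\<^sub>R e) = 0) \<or> finite {t. x + t *\<^sub>R e \<in> frontier G}"
  shows "integral G D = 0"
proof -
  define \<Phi> where "\<Phi> = (\<lambda>x. indicator G x * D x)"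
  have int: "integrable lborel \<Phi>"
    unfolding \<Phi>_def by (rule integrable_indicator_continuous[OF cD bG oG])
  have "norm e = 1" using eB by simp
  then have "integral\<^sup>L lborel \<Phi> = 0"
    unfolding \<Phi>_def
    by (intro lborel_integral_zero_by_lines[OF int[unfolded \<Phi>_def] eB]
        line_integral_of_derivative[OF bG oG cD _ boundary dP degenerate])
  moreover have "\<Phi> = (\<lambda>x. if x \<in> G then D x else 0)"
    by (auto simp: \<Phi>_def indicator_def)
  ultimately show ?thesis
    using integral_lborel[OF int] by (simp add: integral_restrict_UNIV)
qed

section \<open>The moment identity\<close>

text \<open>For a polynomial h = \<Sum> c_\<beta> x^\<beta> vanishing on \<partial>G, applying Stokes to x_i x^\<alpha> h for every
  coordinate i and summing yields one linear relation among the moments for each \<alpha>;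
  it is the \<alpha>-th row of M^d(y) applied to c, up to the factor n + |\<alpha>|.\<close>

lemma moment_identity:
  fixes G :: "(real^'n::finite) set" and h :: "real^'n \<Rightarrow> real" and c :: "('n \<Rightarrow> nat) \<Rightarrow> real"
  assumes bG: "bounded G" and oG: "open G"
    and hc: "\<And>x. h x = (\<Sum>\<beta>\<in>mi_set d. c \<beta> * mono \<beta> x)"
    and hv: "\<And>x. x \<in> frontier G \<Longrightarrow> h x = 0"
  shows "(\<Sum>\<beta>\<in>mi_set d. (real CARD('n) + real (mi_abs \<alpha>) + real (mi_abs \<beta>)) * c \<beta>
           * moments G (\<lambda>j. \<alpha> j + \<beta> j)) = 0"
proof -
  define D where "D = (\<lambda>i x. \<Sum>\<beta>\<in>mi_set d. c \<beta> * ((real (\<alpha> i + \<beta> i) + 1) * mono (\<lambda>j. \<alpha> j + \<beta> j) x))"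
  have cD: "continuous_on UNIV (D i)" for i
    unfolding D_def by (intro continuous_intros continuous_on_compose2[OF continuous_on_mono]) auto
  have hpoly: "poly_le d h" unfolding poly_le_def using hc by blast
  have stokes: "integral G (D i) = 0" for i
  proof (rule integral_directional_derivative_zero[OF bG oG cD, where P="\<lambda>x. x $ i * mono \<alpha> x * h x"])
    show "x $ i * mono \<alpha> x * h x = 0" if "x \<in> frontier G" for x using hv that by simp
    show "((\<lambda>s. (x + s *\<^sub>R axis i 1) $ i * mono \<alpha> (x + s *\<^sub>R axis i 1) * h (x + s *\<^sub>R axis i 1))
        has_real_derivative D i (x + t *\<^sub>R axis i 1)) (at t)" for x t
    proof -
      have expand: "(\<lambda>s. (x + s *\<^sub>R axis i 1) $ i * mono \<alpha> (x + s *\<^sub>R axis i 1) * h (x + s *\<^sub>R axis i 1))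
        = (\<lambda>s. \<Sum>\<beta>\<in>mi_set d. c \<beta> * ((x + s *\<^sub>R axis i 1) $ i * mono (\<lambda>j. \<alpha> j + \<beta> j) (x + s *\<^sub>R axis i 1)))"
        by (simp add: hc sum_distrib_left mono_add algebra_simps sum.distrib)
      show ?thesis unfolding expand D_def
        by (intro DERIV_sum DERIV_cmult has_real_derivative_coord_mono)
    qed
    show "(\<forall>t. (x + t *\<^sub>R axis i 1) $ i * mono \<alpha> (x + t *\<^sub>R axis i 1) * h (x + t *\<^sub>R axis i 1) = 0)
       \<or> finite {t. x + t *\<^sub>R axis i 1 \<in> frontier G}" for x
      using poly_line_vanishes_or_finite[OF hpoly hv, where p=x and e="axis i 1"] by auto
  qed simp
  have "(\<Sum>\<beta>\<in>mi_set d. (real CARD('n) + real (mi_abs \<alpha>) + real (mi_abs \<beta>)) * c \<beta>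
           * moments G (\<lambda>j. \<alpha> j + \<beta> j))
      = integral G (\<lambda>x. \<Sum>\<beta>\<in>mi_set d. (real CARD('n) + real (mi_abs \<alpha>) + real (mi_abs \<beta>)) * c \<beta>
           * mono (\<lambda>j. \<alpha> j + \<beta> j) x)"
    unfolding moments_def
    by (subst integral_sum)
       (auto simp: finite_mi_set intro!: integrable_on_mult_right
             integrable_on_bounded_open[OF continuous_on_mono bG oG])
  also have "\<dots> = integral G (\<lambda>x. \<Sum>i\<in>UNIV. D i x)"
    by (simp only: D_def sum_coordinate_weights)
  also have "\<dots> = (\<Sum>i\<in>UNIV. integral G (D i))"
    by (rule integral_sum) (auto intro: integrable_on_bounded_open[OF cD bG oG])
  finally show ?thesis by (simp add: stokes)
qed

section \<open>The moment system\<close>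

text \<open>If c_0 \<noteq> 0 and c satisfies the moment identity for every \<alpha>, the normalized vector
  g_\<beta> = -c_\<beta>/c_0 solves M^d_m(y)[-1; g] = 0 for every m: row \<alpha> is the identity scaled by
  -1/((n + |\<alpha>|) c_0).\<close>

lemma normalized_coefficients_solve:
  fixes c y :: "('n::finite \<Rightarrow> nat) \<Rightarrow> real"
  assumes c0: "c (\<lambda>_. 0) \<noteq> 0"
    and identity: "\<And>\<alpha>. (\<Sum>\<beta>\<in>mi_set d. (real CARD('n) + real (mi_abs \<alpha>) + real (mi_abs \<beta>)) * c \<beta>
                         * y (\<lambda>j. \<alpha> j + \<beta> j)) = 0"
  shows "(\<lambda>\<beta>. if \<beta> \<in> mi_set d - {\<lambda>_. 0} then - c \<beta> / c (\<lambda>_. 0) else 0) \<in> mom_solutions d m y"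
    (is "?g \<in> _")
  unfolding mom_solutions_def
proof (intro CollectI conjI allI impI ballI)
  show "?g \<beta> = 0" if "\<beta> \<notin> mi_set d - {\<lambda>_. 0}" for \<beta> using that by simp
  fix \<alpha> :: "'n \<Rightarrow> nat"
  define N where "N = real CARD('n) + real (mi_abs \<alpha>)"
  have N: "N > 0" unfolding N_def by (simp add: add_pos_nonneg)
  have ext: "ext_vec ?g \<beta> = - c \<beta> / c (\<lambda>_. 0)" if "\<beta> \<in> mi_set d" for \<beta>
    using that c0 by (auto simp: ext_vec_def)
  have "(\<Sum>\<beta>\<in>mi_set d. mom_entry y \<alpha> \<beta> * ext_vec ?g \<beta>)
      = (\<Sum>\<beta>\<in>mi_set d. mom_entry y \<alpha> \<beta> * (- c \<beta> / c (\<lambda>_. 0)))"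
    by (rule sum.cong[OF refl]) (simp only: ext)
  also have "\<dots> = (- 1 / (N * c (\<lambda>_. 0))) * (\<Sum>\<beta>\<in>mi_set d. (real CARD('n) + real (mi_abs \<alpha>)
           + real (mi_abs \<beta>)) * c \<beta> * y (\<lambda>j. \<alpha> j + \<beta> j))"
    using N c0 unfolding sum_distrib_left
    by (intro sum.cong refl) (simp add: mom_entry_def N_def field_simps)
  also have "\<dots> = 0" by (simp add: identity)
  finally show "(\<Sum>\<beta>\<in>mi_set d. mom_entry y \<alpha> \<beta> * ext_vec ?g \<beta>) = 0" .
qed

lemma generator_properties:
  fixes S :: "(real^'n::finite) set"
  assumes gen: "generates h (vanishing_ideal S)"
    and origin: "0 \<notin> real_zero_set (vanishing_ideal S)"
  shows "\<And>x. x \<in> S \<Longrightarrow> h x = 0" and "h 0 \<noteq> 0"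
proof -
  have ideal: "vanishing_ideal S = {f. \<exists>q. is_poly q \<and> f = (\<lambda>x. q x * h x)}"
    using gen by (simp add: generates_def)
  have "h \<in> vanishing_ideal S"
    unfolding ideal using is_poly_one by fastforce
  then show "\<And>x. x \<in> S \<Longrightarrow> h x = 0" by (simp add: vanishing_ideal_def)
  from origin obtain f where "f \<in> vanishing_ideal S" "f 0 \<noteq> 0"
    by (auto simp: real_zero_set_def)
  then show "h 0 \<noteq> 0" unfolding ideal by auto
qed

theorem corollary1:
  fixes G :: "(real^'n) set" and d k :: nat and h :: "real^'n \<Rightarrow> real"
    and g :: "('n \<Rightarrow> nat) \<Rightarrow> real"
  assumes "bounded G" and "open G"
    and "real_algebraic_set (frontier G)"
    and "G = interior (closure G)"
    and "generates h (vanishing_ideal (frontier G))"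
    and "poly_deg_eq d h"
    and "0 \<notin> real_zero_set (vanishing_ideal (frontier G))"
    and "k \<le> 2 * d"
    and "g \<in> mom_solutions d k (moments G)"
    and "\<forall>g'. g' \<in> mom_solutions d k (moments G) \<longrightarrow> g' = g"
  shows "g \<in> mom_solutions d (2 * d) (moments G)"
proof -
  obtain c where hc: "\<And>x. h x = (\<Sum>\<beta>\<in>mi_set d. c \<beta> * mono \<beta> x)"
    using assms(6) by (auto simp: poly_deg_eq_def poly_le_def)
  note h_vanishes = generator_properties(1)[OF assms(5,7)]
  have c0: "c (\<lambda>_. 0) \<noteq> 0"
    using generator_properties(2)[OF assms(5,7)] poly_expansion_at_zero[OF hc] by simp
  define gs where "gs = (\<lambda>\<beta>. if \<beta> \<in> mi_set d - {\<lambda>_. 0} then - c \<beta> / c (\<lambda>_. 0) else 0)"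
  have solves: "gs \<in> mom_solutions d m (moments G)" for m
    unfolding gs_def
    by (rule normalized_coefficients_solve[OF c0 moment_identity[OF assms(1,2) hc h_vanishes]])
  then have "g = gs" using assms(10) by metis
  then show ?thesis using solves by simp
qed

end
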